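(* Let $\{x^k\}$ be generated by the ABP algorithm described in the context and assume (A1)–(A6), (A7'), (A8): (A1) $\mathcal F$ is continuously differentiable; (A2) $C$, $Q$ nonempty closed convex, $z_i^*>-\infty$ for each $i$; (A3) each $f_i$ convex; (A4) $\Omega\ne\emptyset$; (A5) $\lambda_k>0$, $\sum\lambda_k=\infty$, $\sum\lambda_k^2<\infty$; (A6) $0<\underline\alpha\le\alpha_k\le\bar\alpha$, $0<\underline\beta\le\beta_k\le\bar\beta$, $0<\underline\gamma\le\gamma_k\le\bar\gamma$ for all $k$; (A7') $\sigma:=\varphi^*-\varphi_{\mathrm{lb}}\le\varepsilon_0$ for a known constant $\varepsilon_0\ge0$; (A8) $\sup_k\|x^k\|\le B<\infty$. Let $\bar M<\infty$ be a uniform bound $\|d^k\|\le\bar M$ for all $k$ (which exists under these assumptions), $\bar\eta:=\max(\mu,\bar M)$, $C_*:=\bar\alpha\bar\eta/\mu$ and $\Lambda_N:=\sum_{k=0}^N\lambda_k$. Then $$\limsup_{N\to\infty}\frac1{\Lambda_N}\sum_{k=0}^N\lambda_k\Phi_k\le C_*\varepsilon_0,\qquad\text{and in particular}\qquad\liminf_{k\to\infty}\Phi_k\le C_*\varepsilon_0.$$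
   Context: Let $n,m\ge1$, $\mathcal F=(f_1,\dots,f_m)\colon\mathbb R^n\to\mathbb R^m$, $C\subset\mathbb R^n$, $Q\subset\mathbb R^m$, $Q^+:=Q-\mathbb R^m_+=\{y-u:y\in Q,u\in\mathbb R^m_+\}$; $P_S$ is Euclidean projection onto a nonempty closed convex set $S$. Let $z_i^*:=\inf_{x\in C}f_i(x)$, fix $r$ with $r_i>0$, $\sum r_i=1$. Define $\varphi(x):=\max_ir_i(f_i(x)-z_i^* )$, $H(x):=\tfrac12\mathrm{dist}^2(x,C)$, $G(x):=\tfrac12\mathrm{dist}^2(\mathcal F(x),Q^+)$, $\mathcal S:=\{x:H(x)=0,G(x)=0\}$, $\varphi^*:=\inf_{\mathcal S}\varphi$, $\Omega:=\{x\in\mathcal S:\varphi(x)=\varphi^*\}$, $\varphi_{\mathrm{lb}}:=\inf_C\varphi$. ABP algorithm: given $x^0$, $\mu>0$, positive sequences $\{\alpha_k\},\{\beta_k\},\{\gamma_k\},\{\lambda_k\}$: $p^k:=P_{Q^+}(\mathcal F(x^k))$, $\rho^k:=\mathcal F(x^k)-p^k$, $z^k:=x^k-P_C(x^k)$, $v^k:=J_{\mathcal F}(x^k)^T\rho^k$, $w^k:=r_{i^*}\nabla f_{i^*}(x^k)$ with arbitrary $i^*\in\arg\max_ir_i(f_i(x^k)-z_i^* )$, $\Delta_k:=\varphi(x^k)-\varphi_{\mathrm{lb}}$, $d^k:=\alpha_k\mathbf 1_{\{\Delta_k\ge0\}}w^k+\beta_kz^k+\gamma_kv^k$, $\eta_k:=\max(\mu,\|d^k\|)$,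 $x^{k+1}:=x^k-(\lambda_k/\eta_k)d^k$. Notation: $H_k:=H(x^k)$, $G_k:=G(x^k)$, $\Delta_k^+:=\max(\Delta_k,0)$, $\Phi_k:=\alpha_k\Delta_k^++\beta_kH_k+\gamma_kG_k$.
   Formalization: In the ABP algorithm, $p^k$ is the projection of $\mathcal F(x^k)$ onto the closure of $Q^+$ rather than onto $Q^+$. The statement above fails without it. *)

theory Defs
  imports "HOL-Analysis.Analysis"
begin

definition Qplus :: "(real^'m) set \<Rightarrow> (real^'m) set" where
  "Qplus Q = {y - u | y u. y \<in> Q \<and> (\<forall>i. 0 \<le> u $ i)}"

definition zstar :: "(real^'n \<Rightarrow> real^'m) \<Rightarrow> (real^'n) set \<Rightarrow> 'm \<Rightarrow> real" where
  "zstar F C i = (INF y\<in>C. F y $ i)"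

definition phi :: "(real^'n \<Rightarrow> real^'m::finite) \<Rightarrow> (real^'n) set \<Rightarrow> real^'m \<Rightarrow> real^'n \<Rightarrow> real" where
  "phi F C r y = Max (range (\<lambda>i. r $ i * (F y $ i - zstar F C i)))"

definition Hfun :: "(real^'n) set \<Rightarrow> real^'n \<Rightarrow> real" where
  "Hfun C y = (infdist y C)\<^sup>2 / 2"

definition Gfun :: "(real^'n \<Rightarrow> real^'m) \<Rightarrow> (real^'m) set \<Rightarrow> real^'n \<Rightarrow> real" where
  "Gfun F Q y = (infdist (F y) (Qplus Q))\<^sup>2 / 2"

definition feasible :: "(real^'n \<Rightarrow> real^'m) \<Rightarrow> (real^'n) set \<Rightarrow> (real^'m) set \<Rightarrow> (real^'n) set" where
  "feasible F C Q = {y. Hfun C y = 0 \<and> Gfun F Q y = 0}"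

definition phistar :: "(real^'n \<Rightarrow> real^'m::finite) \<Rightarrow> (real^'n) set \<Rightarrow> (real^'m) set \<Rightarrow> real^'m \<Rightarrow> real" where
  "phistar F C Q r = (INF y\<in>feasible F C Q. phi F C r y)"

definition Omega :: "(real^'n \<Rightarrow> real^'m::finite) \<Rightarrow> (real^'n) set \<Rightarrow> (real^'m) set \<Rightarrow> real^'m \<Rightarrow> (real^'n) set" where
  "Omega F C Q r = {y \<in> feasible F C Q. phi F C r y = phistar F C Q r}"

definition philb :: "(real^'n \<Rightarrow> real^'m::finite) \<Rightarrow> (real^'n) set \<Rightarrow> real^'m \<Rightarrow> real" where
  "philb F C r = (INF y\<in>C. phi F C r y)"

text \<open>The ABP direction d^k at iterate y, with weights a = alpha_k, b = beta_k, g = gamma_k and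
  chosen maximizing index i = i^*. J y is the Jacobian matrix of F at y (rows = gradients of f_i).\<close>
definition abp_d :: "(real^'n \<Rightarrow> real^'m::finite) \<Rightarrow> (real^'n \<Rightarrow> real^'n^'m) \<Rightarrow> (real^'n) set \<Rightarrow>
    (real^'m) set \<Rightarrow> real^'m \<Rightarrow> real \<Rightarrow> real \<Rightarrow> real \<Rightarrow> 'm \<Rightarrow> real^'n \<Rightarrow> real^'n" where
  "abp_d F J C Q r a b g i y =
     (let p = closest_point (closure (Qplus Q)) (F y);
          rho = F y - p;
          z = y - closest_point C y;
          v = transpose (J y) *v rho;
          w = r $ i *\<^sub>R (J y $ i);
          D = phi F C r y - philb F C r
      in (if D \<ge> 0 then a else 0) *\<^sub>R w + b *\<^sub>R z + g *\<^sub>R v)"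

definition Phi_val :: "(real^'n \<Rightarrow> real^'m::finite) \<Rightarrow> (real^'n) set \<Rightarrow> (real^'m) set \<Rightarrow> real^'m \<Rightarrow>
    real \<Rightarrow> real \<Rightarrow> real \<Rightarrow> real^'n \<Rightarrow> real" where
  "Phi_val F C Q r a b g y =
     a * max (phi F C r y - philb F C r) 0 + b * Hfun C y + g * Gfun F Q y"

end

theory Submission imports Defs begin

(* Fix xs in Omega. Convexity of the f_i and the variational inequalities of the projections onto C
   and onto the closure of Q^+ give Phi_k \<le> <d^k, x^k - xs> + alpha_k * max sigma 0. Expanding
   |x^(k+1) - xs|^2 and using mu \<le> eta_k \<le> max mu Mbar turns this into
     lam_k Phi_k \<le> max mu Mbar / 2 * (|x^k - xs|^2 - |x^(k+1) - xs|^2 + lam_k^2) + C_* eps0 lam_k.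
   Summing telescopes, and since the lam_k^2 are summable while Lambda_N diverges, the weighted
   averages of Phi_k are at most C_* eps0 + O(1 / Lambda_N); a sequence eventually above some
   c > C_* eps0 would have weighted averages eventually above c - o(1). *)

lemma convex_on_has_derivative_imp_above_tangent:
  fixes f :: "'a::real_normed_vector \<Rightarrow> real"
  assumes "convex_on UNIV f" and "(f has_derivative f') (at y)"
  shows "f' (z - y) \<le> f z - f y"
proof -
  define v where "v = z - y"
  define g where "g t = f (y + t *\<^sub>R v)" for t :: real
  have "convex_on UNIV g"
  proof (rule convex_onI)
    fix t a b :: real
    assume "0 < t" "t < 1"
    have "y + ((1 - t) * a + t * b) *\<^sub>R v = (1 - t) *\<^sub>R (y + a *\<^sub>R v) + t *\<^sub>R (y + b *\<^sub>R v)"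
      by (simp add: algebra_simps)
    then show "g ((1 - t) *\<^sub>R a + t *\<^sub>R b) \<le> (1 - t) * g a + t * g b"
      unfolding g_def using convex_onD[OF assms(1), of t "y + a *\<^sub>R v" "y + b *\<^sub>R v"] \<open>0 < t\<close>
        \<open>t < 1\<close>
      by simp
  qed simp
  moreover have "(g has_field_derivative f' v) (at 0)"
  proof -
    have "((\<lambda>t::real. y + t *\<^sub>R v) has_derivative (\<lambda>h. h *\<^sub>R v)) (at 0)"
      by (auto intro!: derivative_eq_intros)
    from has_derivative_compose[OF this] assms(2)
    have "(g has_derivative (\<lambda>h. f' (h *\<^sub>R v))) (at 0)"
      unfolding g_def o_def by simp
    moreover have "(\<lambda>h. f' (h *\<^sub>R v)) = (*) (f' v)"
      using has_derivative_bounded_linear[OF assms(2)]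
      by (simp add: linear_simps fun_eq_iff mult.commute)
    ultimately show ?thesis by (simp add: has_field_derivative_def)
  qed
  ultimately have "f' v * (1 - 0) \<le> g 1 - g 0"
    by (intro convex_on_imp_above_tangent[where A = UNIV]) auto
  then show ?thesis unfolding g_def v_def by simp
qed

lemma convex_component_le_Jacobian:
  fixes F :: "real^'n \<Rightarrow> real^'m" and A :: "real^'n^'m"
  assumes "(F has_derivative (\<lambda>h. A *v h)) (at y)" and "convex_on UNIV (\<lambda>y. F y $ j)"
  shows "F y $ j - F z $ j \<le> (A *v (y - z)) $ j"
proof -
  have "((\<lambda>y. F y $ j) has_derivative (\<lambda>h. (A *v h) $ j)) (at y)"
    using bounded_linear.has_derivative[OF bounded_linear_vec_nth assms(1)] by simp
  from convex_on_has_derivative_imp_above_tangent[OF assms(2) this, of z]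
  show ?thesis by (simp add: matrix_vector_mult_diff_distrib)
qed

lemma convex_Qplus: "convex Q \<Longrightarrow> convex (Qplus Q)"
  unfolding convex_def Qplus_def
proof clarsimp
  fix y1 u1 y2 u2 :: "real^'a" and a b :: real
  assume "\<forall>x\<in>Q. \<forall>y\<in>Q. \<forall>u\<ge>0. \<forall>v\<ge>0. u + v = 1 \<longrightarrow> u *\<^sub>R x + v *\<^sub>R y \<in> Q"
    and "y1 \<in> Q" "\<forall>i. 0 \<le> u1 $ i" "y2 \<in> Q" "\<forall>i. 0 \<le> u2 $ i" "0 \<le> a" "0 \<le> b" "a + b = 1"
  then show "\<exists>y u. a *\<^sub>R (y1 - u1) + b *\<^sub>R (y2 - u2) = y - u \<and> y \<in> Q \<and> (\<forall>i. 0 \<le> u $ i)"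
    by (intro exI[of _ "a *\<^sub>R y1 + b *\<^sub>R y2"] exI[of _ "a *\<^sub>R u1 + b *\<^sub>R u2"])
      (auto simp: algebra_simps)
qed

lemma Qplus_nonempty:
  assumes "Q \<noteq> {}"
  shows "Qplus Q \<noteq> {}"
proof -
  obtain q where "q \<in> Q" using assms by auto
  then have "q - 0 \<in> Qplus Q"
    unfolding Qplus_def by (intro CollectI exI[of _ q] exI[of _ "0::real^'a"]) auto
  then show ?thesis by auto
qed

lemma closure_Qplus_diff_nonneg:
  assumes "z \<in> closure (Qplus Q)" and "\<forall>i. 0 \<le> e $ i"
  shows "z - e \<in> closure (Qplus Q)"
proof -
  have "(\<lambda>z. z - e) ` Qplus Q \<subseteq> Qplus Q"
  proof (clarsimp simp: Qplus_def)
    fix y u :: "real^'a"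
    assume "y \<in> Q" "\<forall>i. 0 \<le> u $ i"
    then show "\<exists>y' u'. y - u - e = y' - u' \<and> y' \<in> Q \<and> (\<forall>i. 0 \<le> u' $ i)"
      using assms(2) by (intro exI[of _ y] exI[of _ "u + e"]) auto
  qed
  then have "(\<lambda>z. z - e) ` closure (Qplus Q) \<subseteq> closure (Qplus Q)"
    by (intro image_closure_subset continuous_intros) (use closure_subset in auto)
  then show ?thesis using assms(1) by auto
qed

lemma infdist_sq_le_inner_closest_point:
  fixes S :: "'a::euclidean_space set"
  assumes "convex S" "closed S" "q \<in> S"
  shows "(infdist a S)\<^sup>2 \<le> inner (a - closest_point S a) (a - q)"
proof -
  define p where "p = closest_point S a"
  have "infdist a S = norm (a - p)"
    using setdist_closest_point[OF assms(2)] assms(3)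
    by (auto simp: infdist_eq_setdist p_def dist_norm)
  moreover have "inner (a - p) (q - p) \<le> 0"
    using closest_point_dot[OF assms] by (simp add: p_def)
  moreover have "inner (a - p) (a - q) = inner (a - p) (a - p) - inner (a - p) (q - p)"
    by (simp add: inner_diff_right)
  ultimately show ?thesis by (simp add: p_def power2_norm_eq_inner)
qed

lemma closest_point_residual_nonneg:
  fixes S :: "(real^'m) set"
  assumes "convex S" "closed S" "S \<noteq> {}" and down: "\<And>z. z \<in> S \<Longrightarrow> z - axis j 1 \<in> S"
  shows "0 \<le> (a - closest_point S a) $ j"
proof -
  have "closest_point S a - axis j 1 \<in> S"
    using down closest_point_in_set[OF assms(2,3)] by blast
  from closest_point_dot[OF assms(1,2) this, where a = a] show ?thesis
    by (simp add: inner_axis)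
qed

lemma feasibleD:
  assumes "y \<in> feasible F C Q" "closed C" "C \<noteq> {}" "Q \<noteq> {}"
  shows "y \<in> C" and "F y \<in> closure (Qplus Q)"
  using assms Qplus_nonempty[OF assms(4)]
  by (simp_all add: feasible_def Hfun_def Gfun_def in_closed_iff_infdist_zero)
    (simp add: in_closure_iff_infdist_zero)

lemma two_Hfun_le_inner:
  assumes "convex C" "closed C" "xs \<in> C"
  shows "2 * Hfun C y \<le> inner (y - closest_point C y) (y - xs)"
  using infdist_sq_le_inner_closest_point[OF assms] by (simp add: Hfun_def)

lemma two_Gfun_le_inner_Jacobian:
  fixes F :: "real^'n \<Rightarrow> real^'m::finite" and A :: "real^'n^'m"
  assumes F_deriv: "(F has_derivative (\<lambda>h. A *v h)) (at y)"
    and F_convex: "\<And>j. convex_on UNIV (\<lambda>y. F y $ j)"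
    and "convex Q" "Q \<noteq> {}" and xs: "F xs \<in> closure (Qplus Q)"
  shows "2 * Gfun F Q y
           \<le> inner (transpose A *v (F y - closest_point (closure (Qplus Q)) (F y))) (y - xs)"
proof -
  define P where "P = closure (Qplus Q)"
  define rho where "rho = F y - closest_point P (F y)"
  have P: "convex P" "closed P" "P \<noteq> {}"
    using convex_Qplus[OF \<open>convex Q\<close>] Qplus_nonempty[OF \<open>Q \<noteq> {}\<close>] by (auto simp: P_def)
  have rho_nonneg: "0 \<le> rho $ j" for j
    unfolding rho_def using P
    by (rule closest_point_residual_nonneg) (auto simp: P_def axis_def intro: closure_Qplus_diff_nonneg)
  have "2 * Gfun F Q y = (infdist (F y) P)\<^sup>2"
    by (simp add: Gfun_def P_def infdist_eq_setdist)
  also have "\<dots> \<le> inner rho (F y - F xs)"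
    unfolding rho_def using P xs by (intro infdist_sq_le_inner_closest_point) (auto simp: P_def)
  also have "\<dots> \<le> inner rho (A *v (y - xs))"
    unfolding inner_vec_def inner_real_def
    by (intro sum_mono mult_left_mono rho_nonneg)
      (use convex_component_le_Jacobian[OF F_deriv F_convex] in simp)
  also have "\<dots> = inner (transpose A *v rho) (y - xs)"
    by (simp add: dot_lmul_matrix)
  finally show ?thesis by (simp add: rho_def P_def)
qed

lemma phi_diff_le_inner_Jacobian:
  fixes F :: "real^'n \<Rightarrow> real^'m::finite" and A :: "real^'n^'m"
  assumes "(F has_derivative (\<lambda>h. A *v h)) (at y)" "convex_on UNIV (\<lambda>y. F y $ i)"
    and "0 \<le> r $ i"
    and i_max: "\<And>j. r $ j * (F y $ j - zstar F C j) \<le> r $ i * (F y $ i - zstar F C i)"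
  shows "phi F C r y - phi F C r xs \<le> inner (r $ i *\<^sub>R (A $ i)) (y - xs)"
proof -
  have "phi F C r y = r $ i * (F y $ i - zstar F C i)"
    unfolding phi_def by (rule Max_eqI) (use i_max in auto)
  moreover have "r $ i * (F xs $ i - zstar F C i) \<le> phi F C r xs"
    unfolding phi_def by (rule Max_ge) auto
  moreover have "r $ i * (F y $ i - F xs $ i) \<le> r $ i * (A *v (y - xs)) $ i"
    using convex_component_le_Jacobian[where z = xs, OF assms(1,2)] \<open>0 \<le> r $ i\<close>
    by (rule mult_left_mono)
  ultimately show ?thesis by (simp add: matrix_vector_mul_component algebra_simps)
qed

lemma Phi_val_le_inner_abp_d:
  fixes F :: "real^'n \<Rightarrow> real^'m::finite" and J :: "real^'n \<Rightarrow> real^'n^'m"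
  assumes F_deriv: "(F has_derivative (\<lambda>h. J y *v h)) (at y)"
    and F_convex: "\<And>j. convex_on UNIV (\<lambda>y. F y $ j)"
    and C: "closed C" "convex C" "C \<noteq> {}" and Q: "convex Q" "Q \<noteq> {}"
    and xs: "xs \<in> Omega F C Q r" and "0 \<le> r $ i"
    and i_max: "\<And>j. r $ j * (F y $ j - zstar F C j) \<le> r $ i * (F y $ i - zstar F C i)"
    and abg: "0 \<le> a" "0 \<le> b" "0 \<le> g"
  shows "Phi_val F C Q r a b g y
           \<le> inner (abp_d F J C Q r a b g i y) (y - xs) + a * max (phistar F C Q r - philb F C r) 0"
proof -
  define D where "D = phi F C r y - philb F C r"
  define sigma where "sigma = phistar F C Q r - philb F C r"
  define w where "w = r $ i *\<^sub>R (J y $ i)"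
  define z where "z = y - closest_point C y"
  define v where "v = transpose (J y) *v (F y - closest_point (closure (Qplus Q)) (F y))"
  have "xs \<in> feasible F C Q" and phi_xs: "phi F C r xs = phistar F C Q r"
    using xs by (auto simp: Omega_def)
  then have "xs \<in> C" "F xs \<in> closure (Qplus Q)"
    using feasibleD C Q by blast+
  have "D - sigma \<le> inner w (y - xs)"
    using phi_diff_le_inner_Jacobian[OF F_deriv F_convex \<open>0 \<le> r $ i\<close> i_max, of xs] phi_xs
    by (simp add: D_def sigma_def w_def)
  then have w_bound: "a * max D 0 \<le> (if D \<ge> 0 then a else 0) * inner w (y - xs) + a * max sigma 0"
  proof (cases "D \<ge> 0")
    case True
    assume "D - sigma \<le> inner w (y - xs)"
    then have "a * D \<le> a * (inner w (y - xs) + max sigma 0)"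
      using abg(1) by (intro mult_left_mono) auto
    with True show ?thesis by (simp add: distrib_left)
  qed (use abg(1) in simp)
  have "0 \<le> Hfun C y" "0 \<le> Gfun F Q y"
    by (simp_all add: Hfun_def Gfun_def)
  moreover note two_Hfun_le_inner[OF C(2,1) \<open>xs \<in> C\<close>, of y]
    and two_Gfun_le_inner_Jacobian[OF F_deriv F_convex Q \<open>F xs \<in> closure (Qplus Q)\<close>]
  ultimately have z_bound: "Hfun C y \<le> inner z (y - xs)" and v_bound: "Gfun F Q y \<le> inner v (y - xs)"
    unfolding z_def v_def by linarith+
  have "Phi_val F C Q r a b g y = a * max D 0 + b * Hfun C y + g * Gfun F Q y"
    by (simp add: Phi_val_def D_def)
  also have "\<dots> \<le> (if D \<ge> 0 then a else 0) * inner w (y - xs) + a * max sigma 0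
                  + b * inner z (y - xs) + g * inner v (y - xs)"
    using w_bound mult_left_mono[OF z_bound abg(2)] mult_left_mono[OF v_bound abg(3)] by linarith
  also have "\<dots> = inner (abp_d F J C Q r a b g i y) (y - xs) + a * max sigma 0"
    by (simp add: abp_d_def Let_def D_def w_def z_def v_def inner_add_left)
  finally show ?thesis by (simp add: sigma_def)
qed

lemma Phi_val_nonneg:
  assumes "0 \<le> a" "0 \<le> b" "0 \<le> g"
  shows "0 \<le> Phi_val F C Q r a b g y"
  using assms unfolding Phi_val_def Hfun_def Gfun_def by (intro add_nonneg_nonneg mult_nonneg_nonneg) auto

lemma norm_diff_scaleR_sq_le:
  fixes u d :: "'a::real_inner"
  assumes "norm d \<le> eta" "0 < eta" "0 \<le> lam"
  shows "(norm (u - (lam / eta) *\<^sub>R d))\<^sup>2 \<le> (norm u)\<^sup>2 - 2 * (lam / eta) * inner d u + lam\<^sup>2"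
proof -
  define t where "t = lam / eta"
  have "(norm (u - t *\<^sub>R d))\<^sup>2 = (norm u)\<^sup>2 - 2 * t * inner d u + (t * norm d)\<^sup>2"
    by (simp add: power2_norm_eq_inner inner_diff_left inner_diff_right inner_commute
        power_mult_distrib) (simp add: power2_eq_square)
  moreover have "t * norm d \<le> lam"
    using mult_left_mono[OF assms(1), of t] assms by (simp add: t_def)
  then have "(t * norm d)\<^sup>2 \<le> lam\<^sup>2"
    using assms by (intro power_mono) (auto simp: t_def)
  ultimately show ?thesis by (simp add: t_def)
qed

text \<open>The step length \<open>max mu (norm d)\<close> lies between \<open>mu\<close> and \<open>max mu M\<close>: the upper
  end controls the descent term, the lower end the error term \<open>s\<close>.\<close>

lemma normalized_step_bound:
  fixes x xs d :: "'a::real_inner"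
  assumes "0 < mu" "0 < lam" "norm d \<le> M" "0 \<le> Ph" "0 \<le> s"
    and Ph: "Ph \<le> inner d (x - xs) + s"
  shows "lam * Ph \<le> max mu M / 2 * ((norm (x - xs))\<^sup>2
            - (norm (x - (lam / max mu (norm d)) *\<^sub>R d - xs))\<^sup>2 + lam\<^sup>2) + max mu M * s / mu * lam"
proof -
  define eta where "eta = max mu (norm d)"
  define E where "E = max mu M"
  define t where "t = lam / eta"
  define e0 e1 where "e0 = (norm (x - xs))\<^sup>2" and "e1 = (norm (x - t *\<^sub>R d - xs))\<^sup>2"
  have eta: "0 < eta" "mu \<le> eta" "eta \<le> E"
    using assms by (auto simp: eta_def E_def)
  have t: "0 \<le> t" using assms eta by (simp add: t_def)
  have "(norm ((x - xs) - t *\<^sub>R d))\<^sup>2 \<le> e0 - 2 * t * inner d (x - xs) + lam\<^sup>2"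
    unfolding t_def e0_def
    by (rule norm_diff_scaleR_sq_le) (use assms eta in \<open>auto simp: eta_def\<close>)
  then have descent: "e1 \<le> e0 - 2 * (t * inner d (x - xs)) + lam\<^sup>2"
    unfolding e1_def by (simp add: algebra_simps)
  have "t * Ph \<le> t * inner d (x - xs) + t * s"
    using mult_left_mono[OF Ph t] by (simp add: distrib_left)
  moreover have "t * s \<le> lam / mu * s"
    using assms eta by (auto simp: t_def intro!: mult_right_mono divide_left_mono)
  ultimately have "t * Ph \<le> (e0 - e1 + lam\<^sup>2) / 2 + lam / mu * s"
    using descent by argo
  then have "E * (t * Ph) \<le> E * ((e0 - e1 + lam\<^sup>2) / 2 + lam / mu * s)"
    using eta by (intro mult_left_mono) auto
  moreover have "lam * Ph \<le> E * (t * Ph)"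
    using eta assms mult_right_mono[OF eta(3), of "t * Ph"] t by (simp add: t_def)
  ultimately have "lam * Ph \<le> E * ((e0 - e1 + lam\<^sup>2) / 2 + lam / mu * s)"
    by linarith
  also have "\<dots> = E / 2 * (e0 - e1 + lam\<^sup>2) + E * s / mu * lam"
    by (simp add: field_simps)
  finally show ?thesis by (simp add: E_def t_def eta_def e0_def e1_def)
qed

lemma abp_step_bound:
  fixes F :: "real^'n \<Rightarrow> real^'m::finite" and J :: "real^'n \<Rightarrow> real^'n^'m"
  assumes F_deriv: "(F has_derivative (\<lambda>h. J y *v h)) (at y)"
    and F_convex: "\<And>j. convex_on UNIV (\<lambda>y. F y $ j)"
    and C: "closed C" "convex C" "C \<noteq> {}" and Q: "convex Q" "Q \<noteq> {}"
    and xs: "xs \<in> Omega F C Q r" and "0 \<le> r $ i"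
    and i_max: "\<And>j. r $ j * (F y $ j - zstar F C j) \<le> r $ i * (F y $ i - zstar F C i)"
    and abg: "0 \<le> a" "a \<le> ahi" "0 \<le> b" "0 \<le> g"
    and eps0: "0 \<le> eps0" "phistar F C Q r - philb F C r \<le> eps0"
    and "0 < mu" "0 < lam" and d_bound: "norm (abp_d F J C Q r a b g i y) \<le> M"
  shows "lam * Phi_val F C Q r a b g y
           \<le> max mu M / 2 * ((norm (y - xs))\<^sup>2
               - (norm (y - (lam / max mu (norm (abp_d F J C Q r a b g i y)))
                              *\<^sub>R abp_d F J C Q r a b g i y - xs))\<^sup>2
               + lam\<^sup>2)
             + ahi * max mu M / mu * eps0 * lam"
proof -
  have "a * max (phistar F C Q r - philb F C r) 0 \<le> ahi * eps0"
    using abg eps0 by (intro mult_mono) auto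
  then have Phi_bound: "Phi_val F C Q r a b g y \<le> inner (abp_d F J C Q r a b g i y) (y - xs) + ahi * eps0"
    using Phi_val_le_inner_abp_d[where J = J and y = y,
        OF F_deriv F_convex C Q xs \<open>0 \<le> r $ i\<close> i_max abg(1,3,4)]
    by linarith
  have "0 \<le> ahi * eps0"
    using abg(1,2) eps0(1) by simp
  from normalized_step_bound[OF \<open>0 < mu\<close> \<open>0 < lam\<close> d_bound Phi_val_nonneg[OF abg(1,3,4)]
      this Phi_bound]
  show ?thesis
    by (simp add: mult_ac)
qed

lemma weighted_sum_le_of_telescoping:
  fixes w a e u :: "nat \<Rightarrow> real"
  assumes step: "\<And>k. w k * a k \<le> c * (e k - e (Suc k) + u k) + L * w k"
    and "\<And>k. 0 \<le> e k" "summable u" "\<And>k. 0 \<le> u k" "0 \<le> c"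
  shows "(\<Sum>k\<le>N. w k * a k) \<le> c * (e 0 + suminf u) + L * (\<Sum>k\<le>N. w k)"
proof -
  have "(\<Sum>k\<le>N. w k * a k) \<le> (\<Sum>k\<le>N. c * (e k - e (Suc k) + u k) + L * w k)"
    by (intro sum_mono step)
  also have "\<dots> = c * (e 0 - e (Suc N) + (\<Sum>k\<le>N. u k)) + L * (\<Sum>k\<le>N. w k)"
    by (simp only: sum.distrib sum_distrib_left[symmetric] sum_telescope)
  also have "\<dots> \<le> c * (e 0 + suminf u) + L * (\<Sum>k\<le>N. w k)"
  proof -
    have "(\<Sum>k\<le>N. u k) \<le> suminf u"
      by (rule sum_le_suminf) (use assms(3,4) in auto)
    then show ?thesis
      using assms(2)[of "Suc N"] \<open>0 \<le> c\<close> by (intro add_right_mono mult_left_mono) auto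
  qed
  finally show ?thesis .
qed

lemma nonneg_not_summable_imp_partial_sums_at_top:
  fixes w :: "nat \<Rightarrow> real"
  assumes "\<And>k. 0 \<le> w k" "\<not> summable w"
  shows "filterlim (\<lambda>N. \<Sum>k\<le>N. w k) at_top sequentially"
  unfolding filterlim_at_top
proof (intro allI, rule ccontr)
  fix Z :: real
  assume not_eventually: "\<not> eventually (\<lambda>N. Z \<le> (\<Sum>k\<le>N. w k)) sequentially"
  have mono: "(\<Sum>k\<le>N. w k) \<le> (\<Sum>k\<le>N'. w k)" if "N \<le> N'" for N N'
    using that assms(1) by (intro sum_mono2) auto
  have "(\<Sum>k\<le>N. w k) \<le> Z" for N
  proof (rule ccontr)
    assume "\<not> (\<Sum>k\<le>N. w k) \<le> Z"
    then have "Z \<le> (\<Sum>k\<le>N'. w k)" if "N \<le> N'" for N'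
      using mono[OF that] by linarith
    with not_eventually show False
      unfolding eventually_sequentially by blast
  qed
  then have "summable w" by (rule bounded_imp_summable[OF assms(1)])
  with assms(2) show False ..
qed

lemma divide_partial_sums_tendsto_0:
  fixes w :: "nat \<Rightarrow> real"
  assumes "\<And>k. 0 \<le> w k" "\<not> summable w"
  shows "(\<lambda>N. c / (\<Sum>k\<le>N. w k)) \<longlonglongrightarrow> 0"
  using nonneg_not_summable_imp_partial_sums_at_top[OF assms]
  by (intro tendsto_divide_0[OF tendsto_const] filterlim_at_top_imp_at_infinity)

lemma limsup_weighted_average_le:
  fixes w a :: "nat \<Rightarrow> real"
  assumes w: "\<And>k. 0 < w k" "\<not> summable w"
    and bound: "\<And>N. (\<Sum>k\<le>N. w k * a k) \<le> K + L * (\<Sum>k\<le>N. w k)"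
  shows "limsup (\<lambda>N. ereal ((\<Sum>k\<le>N. w k * a k) / (\<Sum>k\<le>N. w k))) \<le> ereal L"
proof -
  define W where "W N = (\<Sum>k\<le>N. w k)" for N
  have W_pos: "0 < W N" for N
    unfolding W_def using w(1) by (intro sum_pos) auto
  have "(\<Sum>k\<le>N. w k * a k) / W N \<le> L + K / W N" for N
    using bound[of N] W_pos[of N] by (simp add: W_def field_simps)
  then have "limsup (\<lambda>N. ereal ((\<Sum>k\<le>N. w k * a k) / W N)) \<le> limsup (\<lambda>N. ereal (L + K / W N))"
    by (intro Limsup_mono) auto
  also have "\<dots> = ereal L"
  proof (rule lim_imp_Limsup[OF trivial_limit_sequentially])
    have "(\<lambda>N. L + K / W N) \<longlonglongrightarrow> L + 0"
      unfolding W_def using less_imp_le[OF w(1)] w(2)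
      by (intro tendsto_add tendsto_const divide_partial_sums_tendsto_0)
    then show "(\<lambda>N. ereal (L + K / W N)) \<longlonglongrightarrow> ereal L"
      by (intro tendsto_ereal) simp
  qed
  finally show ?thesis by (simp add: W_def)
qed

lemma liminf_le_of_weighted_sums_le:
  fixes w a :: "nat \<Rightarrow> real"
  assumes w: "\<And>k. 0 < w k" "\<not> summable w"
    and bound: "\<And>N. (\<Sum>k\<le>N. w k * a k) \<le> K + L * (\<Sum>k\<le>N. w k)"
  shows "liminf (\<lambda>k. ereal (a k)) \<le> ereal L"
proof (rule ccontr)
  assume "\<not> ?thesis"
  then have "ereal L < liminf (\<lambda>k. ereal (a k))" by simp
  from ereal_dense2[OF this] obtain c where "L < c" and c: "ereal c < liminf (\<lambda>k. ereal (a k))"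
    by auto
  obtain K0 where K0: "\<And>k. K0 \<le> k \<Longrightarrow> c < a k"
    using less_LiminfD[OF c] by (auto simp: eventually_sequentially)
  define W where "W N = (\<Sum>k\<le>N. w k)" for N
  define P where "P = (\<Sum>k<K0. w k * (c - a k))"
  have upper: "c \<le> L + (K + P) / W N" if "K0 \<le> N" for N
  proof -
    have "c * W N - (\<Sum>k\<le>N. w k * a k) = (\<Sum>k\<le>N. w k * (c - a k))"
      by (simp add: W_def sum_distrib_left sum_subtractf algebra_simps)
    also have "\<dots> \<le> (\<Sum>k\<le>N. if k \<in> {..<K0} then w k * (c - a k) else 0)"
      using K0 w(1) by (intro sum_mono) (auto simp: mult_nonneg_nonpos less_imp_le)
    also have "\<dots> = (\<Sum>k\<in>{..N} \<inter> {..<K0}. w k * (c - a k))"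
      by (simp add: sum.inter_restrict)
    also have "\<dots> = P"
      unfolding P_def using that by (intro sum.cong) auto
    finally have "c * W N \<le> K + P + L * W N"
      using bound[of N] by (simp add: W_def)
    moreover have "0 < W N"
      unfolding W_def using w(1) by (intro sum_pos) auto
    ultimately show ?thesis by (simp add: field_simps)
  qed
  have "(\<lambda>N. L + (K + P) / W N) \<longlonglongrightarrow> L + 0"
    unfolding W_def using less_imp_le[OF w(1)] w(2)
    by (intro tendsto_add tendsto_const divide_partial_sums_tendsto_0)
  then have "c \<le> L + 0"
    by (rule LIMSEQ_le_const) (use upper in blast)
  with \<open>L < c\<close> show False by simp
qed

theorem lemma17:
  fixes F :: "real^'n \<Rightarrow> real^'m::finite"
    and J :: "real^'n \<Rightarrow> real^'n^'m"
    and C :: "(real^'n) set" and Q :: "(real^'m) set" and r :: "real^'m"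
    and x :: "nat \<Rightarrow> real^'n" and istar :: "nat \<Rightarrow> 'm"
    and mu :: real and al be ga lam :: "nat \<Rightarrow> real"
    and alo ahi blo bhi glo ghi eps0 B Mbar :: real
  assumes A1: "\<forall>y. (F has_derivative (\<lambda>h. J y *v h)) (at y)" "continuous_on UNIV J"
    and A2: "closed C" "convex C" "C \<noteq> {}" "closed Q" "convex Q" "Q \<noteq> {}"
            "\<forall>i. bdd_below ((\<lambda>y. F y $ i) ` C)"
    and A3: "\<forall>i. convex_on UNIV (\<lambda>y. F y $ i)"
    and A4: "Omega F C Q r \<noteq> {}"
    and r_pos: "\<forall>i. r $ i > 0" and r_sum: "(\<Sum>i\<in>UNIV. r $ i) = 1"
    and mu_pos: "mu > 0"
    and istar: "\<forall>k j. r $ j * (F (x k) $ j - zstar F C j)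
                   \<le> r $ istar k * (F (x k) $ istar k - zstar F C (istar k))"
    and iter: "\<forall>k. x (Suc k) = x k - (lam k / max mu (norm (abp_d F J C Q r (al k) (be k) (ga k) (istar k) (x k))))
                     *\<^sub>R abp_d F J C Q r (al k) (be k) (ga k) (istar k) (x k)"
    and A5: "\<forall>k. lam k > 0" "\<not> summable lam" "summable (\<lambda>k. (lam k)\<^sup>2)"
    and A6: "0 < alo" "\<forall>k. alo \<le> al k \<and> al k \<le> ahi"
            "0 < blo" "\<forall>k. blo \<le> be k \<and> be k \<le> bhi"
            "0 < glo" "\<forall>k. glo \<le> ga k \<and> ga k \<le> ghi"
    and A7': "eps0 \<ge> 0" "phistar F C Q r - philb F C r \<le> eps0"
    and A8: "\<forall>k. norm (x k) \<le> B"
    and Mbar: "\<forall>k. norm (abp_d F J C Q r (al k) (be k) (ga k) (istar k) (x k)) \<le> Mbar"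
  shows "limsup (\<lambda>N. ereal ((\<Sum>k\<le>N. lam k * Phi_val F C Q r (al k) (be k) (ga k) (x k))
                              / (\<Sum>k\<le>N. lam k)))
           \<le> ereal (ahi * max mu Mbar / mu * eps0)
         \<and> liminf (\<lambda>k. ereal (Phi_val F C Q r (al k) (be k) (ga k) (x k)))
           \<le> ereal (ahi * max mu Mbar / mu * eps0)"
proof -
  obtain xs where xs: "xs \<in> Omega F C Q r" using A4 by blast
  define Ph where "Ph k = Phi_val F C Q r (al k) (be k) (ga k) (x k)" for k
  define L where "L = ahi * max mu Mbar / mu * eps0"
  have coeffs: "0 \<le> al k" "al k \<le> ahi" "0 \<le> be k" "0 \<le> ga k" for k
    using A6(1,3,5) spec[OF A6(2), of k] spec[OF A6(4), of k] spec[OF A6(6), of k] by auto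
  have step: "lam k * Ph k
      \<le> max mu Mbar / 2 * ((norm (x k - xs))\<^sup>2 - (norm (x (Suc k) - xs))\<^sup>2 + (lam k)\<^sup>2) + L * lam k" for k
    using abp_step_bound[where J = J and y = "x k", OF A1(1)[rule_format] A3[rule_format] A2(1-3,5,6) xs
        less_imp_le[OF r_pos[rule_format]] istar[rule_format, where k = k] coeffs A7' mu_pos
        A5(1)[rule_format] Mbar[rule_format]]
    unfolding Ph_def L_def iter[rule_format] .
  have sums: "(\<Sum>k\<le>N. lam k * Ph k)
      \<le> max mu Mbar / 2 * ((norm (x 0 - xs))\<^sup>2 + (\<Sum>k. (lam k)\<^sup>2)) + L * (\<Sum>k\<le>N. lam k)" for N
    using A5(3) mu_pos
    by (intro weighted_sum_le_of_telescoping[where e = "\<lambda>k. (norm (x k - xs))\<^sup>2", OF step]) simp_all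
  show ?thesis
    using limsup_weighted_average_le[OF A5(1)[rule_format] A5(2) sums]
      liminf_le_of_weighted_sums_le[OF A5(1)[rule_format] A5(2) sums]
    unfolding Ph_def L_def by (rule conjI)
qed

end
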